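(* For every $n$ there exists a multigraph on $n$ nodes and $O(n^2)$ edges for which every friendly minimum $s,t$-cut sparsifier has $\Omega(n^2)$ edges.
   Context: For a multigraph $G=(V,E)$, $\deg(v)$ is the number of edges incident to $v$ (with multiplicity). A cut $S\subseteq V$ is unfriendly if there is a node $s\in S$ with $|E(\{s\},V\setminus S)|>0.6\deg(s)$ or a node $t\notin S$ with $|E(\{t\},S)|>0.6\deg(t)$ (edges counted with multiplicity); otherwise it is friendly. A sparsifier of $G$ is a graph $H$ obtained by deleting edges and contracting subsets of nodes (self-loops removed, parallel edges kept and counted separately). $H$ preserves a cut if none of its edges is deleted and no two nodes from different sides are contracted together. $H$ is a friendly minimum $s,t$-cut sparsifier of $G$ if for every pair $s,t$ for which all minimum $s,t$-cuts in $G$ are friendly, at least one minimum $s,t$-cut is preserved in $H$. *)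

theory Defs
  imports Complex_Main "HOL-Library.Multiset"
begin

text \<open>A multigraph on vertex set V: a finite multiset of edges, each edge an
unordered pair of distinct vertices (no self-loops; parallel edges are copies).\<close>
definition multigraph :: "'a set \<Rightarrow> 'a set multiset \<Rightarrow> bool" where
  "multigraph V E \<longleftrightarrow> finite V \<and> (\<forall>e\<in>#E. e \<subseteq> V \<and> card e = 2)"

definition deg :: "'a set multiset \<Rightarrow> 'a \<Rightarrow> nat" where
  "deg E v = size (filter_mset (\<lambda>e. v \<in> e) E)"

text \<open>E(A,B): edges (with multiplicity) with an endpoint in A and an endpoint in B
(used for disjoint A, B).\<close>
definition cross_edges :: "'a set multiset \<Rightarrow> 'a set \<Rightarrow> 'a set \<Rightarrow> 'a set multiset" where
  "cross_edges E A B = filter_mset (\<lambda>e. e \<inter> A \<noteq> {} \<and> e \<inter> B \<noteq> {}) E"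

definition cut_value :: "'a set \<Rightarrow> 'a set multiset \<Rightarrow> 'a set \<Rightarrow> nat" where
  "cut_value V E S = size (cross_edges E S (V - S))"

definition st_cut :: "'a set \<Rightarrow> 'a \<Rightarrow> 'a \<Rightarrow> 'a set \<Rightarrow> bool" where
  "st_cut V s t S \<longleftrightarrow> S \<subseteq> V \<and> s \<in> S \<and> t \<notin> S"

definition min_st_cut :: "'a set \<Rightarrow> 'a set multiset \<Rightarrow> 'a \<Rightarrow> 'a \<Rightarrow> 'a set \<Rightarrow> bool" where
  "min_st_cut V E s t S \<longleftrightarrow> st_cut V s t S \<and>
     (\<forall>S'. st_cut V s t S' \<longrightarrow> cut_value V E S \<le> cut_value V E S')"

definition unfriendly :: "'a set \<Rightarrow> 'a set multiset \<Rightarrow> 'a set \<Rightarrow> bool" where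
  "unfriendly V E S \<longleftrightarrow>
     (\<exists>s\<in>S. real (size (cross_edges E {s} (V - S))) > 0.6 * real (deg E s)) \<or>
     (\<exists>t\<in>V - S. real (size (cross_edges E {t} S)) > 0.6 * real (deg E t))"

definition friendly :: "'a set \<Rightarrow> 'a set multiset \<Rightarrow> 'a set \<Rightarrow> bool" where
  "friendly V E S \<longleftrightarrow> \<not> unfriendly V E S"

text \<open>A sparsifier H of G=(V,E) is given by the multiset F \<subseteq># E of non-deleted edges
and a contraction map phi (nodes u, v are contracted together iff phi u = phi v).
The edges of H are the edges of F whose endpoints are not contracted together
(self-loops removed, parallel edges kept).\<close>
definition sparsifier_edges :: "'a set multiset \<Rightarrow> ('a \<Rightarrow> 'b) \<Rightarrow> 'b set multiset" where
  "sparsifier_edges F phi = image_mset (\<lambda>e. phi ` e) (filter_mset (\<lambda>e. card (phi ` e) = 2) F)"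

definition preserves_cut :: "'a set \<Rightarrow> 'a set multiset \<Rightarrow> 'a set multiset \<Rightarrow> ('a \<Rightarrow> 'b) \<Rightarrow> 'a set \<Rightarrow> bool" where
  "preserves_cut V E F phi S \<longleftrightarrow>
     (\<forall>e\<in>#cross_edges E S (V - S). count F e = count E e) \<and>
     (\<forall>u\<in>V. \<forall>v\<in>V. phi u = phi v \<longrightarrow> (u \<in> S \<longleftrightarrow> v \<in> S))"

definition friendly_min_cut_sparsifier ::
  "'a set \<Rightarrow> 'a set multiset \<Rightarrow> 'a set multiset \<Rightarrow> ('a \<Rightarrow> 'b) \<Rightarrow> bool" where
  "friendly_min_cut_sparsifier V E F phi \<longleftrightarrow> F \<subseteq># E \<and>
     (\<forall>s\<in>V. \<forall>t\<in>V. s \<noteq> t \<and> (\<forall>S. min_st_cut V E s t S \<longrightarrow> friendly V E S) \<longrightarrow>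
        (\<exists>S. min_st_cut V E s t S \<and> preserves_cut V E F phi S))"

end

theory Submission
  imports Defs
begin

text \<open>Take two hubs s, t and disjoint sets A, B of about n/2 vertices each; join s to every
vertex of A and t to every vertex of B by n parallel edges, and add all A-B edges once.
A vertex of A misplaced on the t-side (or of B on the s-side) costs n hub edges but saves
fewer than n bipartite ones, so {s} \<union> A is the unique minimum s,t-cut, of value
|A| |B|, roughly n^2/8. Every vertex sends less than half its degree across this cut (its n hub
edges stay on its side), so the cut is friendly, and a friendly sparsifier must keep all of it.\<close>

lemma cut_value_le_sparsifier_size:
  assumes "multigraph V E" and "preserves_cut V E F phi S"
  shows "cut_value V E S \<le> size (sparsifier_edges F phi)"
proof -
  let ?X = "cross_edges E S (V - S)"
  have "?X \<subseteq># filter_mset (\<lambda>e. card (phi ` e) = 2) F"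
  proof (rule mset_subset_eqI)
    fix e
    show "count ?X e \<le> count (filter_mset (\<lambda>e. card (phi ` e) = 2) F) e"
    proof (cases "e \<in># ?X")
      case True
      then obtain u v where "u \<in> e" "u \<in> S" "v \<in> e" "v \<in> V" "v \<notin> S" and eE: "e \<in># E"
        by (auto simp: cross_edges_def)
      moreover have "e \<subseteq> V" "card e = 2"
        using assms(1) eE by (auto simp: multigraph_def)
      ultimately have "e = {u, v}" "u \<in> V"
        by (metis card_2_iff doubleton_eq_iff insertE singletonD, blast)
      moreover have "phi u \<noteq> phi v"
        using assms(2) \<open>u \<in> V\<close> \<open>v \<in> V\<close> \<open>u \<in> S\<close> \<open>v \<notin> S\<close>
        unfolding preserves_cut_def by blast
      moreover have "count F e = count E e"
        using assms(2) True by (auto simp: preserves_cut_def)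
      ultimately show ?thesis
        by (simp add: cross_edges_def)
    qed (simp add: not_in_iff)
  qed
  then show ?thesis
    unfolding cut_value_def sparsifier_edges_def by (simp add: size_mset_mono)
qed

lemma min_st_cut_le_sparsifier_size:
  assumes "multigraph V E" and "friendly_min_cut_sparsifier V E F phi"
    and "s \<in> V" "t \<in> V" "s \<noteq> t"
    and "\<forall>S'. min_st_cut V E s t S' \<longrightarrow> friendly V E S'"
    and "min_st_cut V E s t S"
  shows "cut_value V E S \<le> size (sparsifier_edges F phi)"
proof -
  obtain S' where "min_st_cut V E s t S'" "preserves_cut V E F phi S'"
    using assms(2-6) unfolding friendly_min_cut_sparsifier_def by blast
  moreover from this(1) have "cut_value V E S = cut_value V E S'"
    using assms(7) by (auto simp: min_st_cut_def intro: antisym)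
  ultimately show ?thesis
    using cut_value_le_sparsifier_size[OF assms(1)] by simp
qed

lemma in_repeat_mset_iff: "x \<in># repeat_mset n M \<longleftrightarrow> n > 0 \<and> x \<in># M"
  by (simp flip: count_greater_zero_iff)

lemma filter_repeat_mset: "filter_mset P (repeat_mset n M) = repeat_mset n (filter_mset P M)"
  by (rule multiset_eqI) simp

definition hub_graph :: "'a \<Rightarrow> 'a \<Rightarrow> nat \<Rightarrow> 'a set \<Rightarrow> 'a set \<Rightarrow> 'a set multiset" where
  "hub_graph s t k A B =
     repeat_mset k (image_mset (\<lambda>a. {s, a}) (mset_set A) + image_mset (\<lambda>b. {t, b}) (mset_set B))
     + image_mset (\<lambda>(a, b). {a, b}) (mset_set (A \<times> B))"

lemma size_filter_hub_graph:
  assumes "finite A" "finite B"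
  shows "size (filter_mset Q (hub_graph s t k A B)) =
    k * (card {a \<in> A. Q {s, a}} + card {b \<in> B. Q {t, b}}) + card {(a, b) \<in> A \<times> B. Q {a, b}}"
proof -
  have "{p \<in> A \<times> B. Q (case p of (a, b) \<Rightarrow> {a, b})} = {(a, b) \<in> A \<times> B. Q {a, b}}"
    by auto
  with assms show ?thesis
    by (simp add: hub_graph_def filter_repeat_mset filter_mset_image_mset algebra_simps)
qed

lemma size_hub_graph:
  assumes "finite A" "finite B"
  shows "size (hub_graph s t k A B) = k * (card A + card B) + card A * card B"
  using assms by (simp add: hub_graph_def card_cartesian_product algebra_simps)

text \<open>Read x, p as the numbers of vertices of A on the s-side and on the t-side of an s,t-cut, and y, q
as those of B on the t-side and on the s-side: the right-hand side bounds the cut value.\<close>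

lemma mult_add_le_weighted:
  fixes x p y q k :: nat
  assumes "x + p < k" and "y + q < k"
  shows "(x + p) * (y + q) + p + q \<le> k * p + k * q + x * y"
proof -
  have "(x + 1) * q \<le> k * q" and "(y + q + 1) * p \<le> k * p"
    using assms by (intro mult_right_mono; simp)+
  then show ?thesis
    by (simp add: algebra_simps)
qed

locale hub_graph_on =
  fixes V :: "'a set" and s t :: 'a and k :: nat and A B :: "'a set"
  assumes finite: "finite A" "finite B"
    and V_eq: "V = insert s (insert t (A \<union> B))"
    and distinct: "s \<noteq> t" "s \<notin> A \<union> B" "t \<notin> A \<union> B" "A \<inter> B = {}"
    and heavy: "card A < k" "card B < k"
begin

abbreviation G :: "'a set multiset" where
  "G \<equiv> hub_graph s t k A B"

lemma multigraph: "multigraph V G"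
proof -
  have "finite V"
    using finite V_eq by simp
  moreover have "e \<subseteq> V \<and> card e = 2" if "e \<in># G" for e
    using that finite distinct unfolding V_eq hub_graph_def
    by (auto simp: in_repeat_mset_iff card_insert_if disjoint_iff)
  ultimately show ?thesis
    by (simp add: multigraph_def)
qed

lemma cut_value_ge:
  assumes "st_cut V s t S"
  shows "card A * card B + card (A - S) + card (B \<inter> S) \<le> cut_value V G S"
proof -
  let ?Q = "\<lambda>e. e \<inter> S \<noteq> {} \<and> e \<inter> (V - S) \<noteq> {}"
  have "{a \<in> A. ?Q {s, a}} = A - S" "{b \<in> B. ?Q {t, b}} = B \<inter> S"
    using assms distinct unfolding st_cut_def V_eq by auto
  moreover have "card ((A \<inter> S) \<times> (B - S)) \<le> card {(a, b) \<in> A \<times> B. ?Q {a, b}}"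
    using finite unfolding V_eq by (intro card_mono) (auto intro: finite_subset[of _ "A \<times> B"])
  moreover have "card A * card B + card (A - S) + card (B \<inter> S)
      \<le> k * card (A - S) + k * card (B \<inter> S) + card (A \<inter> S) * card (B - S)"
    using mult_add_le_weighted[of "card (A \<inter> S)" "card (A - S)" k "card (B - S)" "card (B \<inter> S)"]
      heavy finite card_Int_Diff[of A S] card_Int_Diff[of B S] by (simp add: add.commute)
  ultimately show ?thesis
    unfolding cut_value_def cross_edges_def size_filter_hub_graph[OF finite]
    by (simp add: card_cartesian_product algebra_simps)
qed

lemma cut_value_hub_cut: "cut_value V G (insert s A) = card A * card B"
proof -
  let ?Q = "\<lambda>e. e \<inter> insert s A \<noteq> {} \<and> e \<inter> (V - insert s A) \<noteq> {}"
  have "{a \<in> A. ?Q {s, a}} = {}" "{b \<in> B. ?Q {t, b}} = {}"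
    "{(a, b) \<in> A \<times> B. ?Q {a, b}} = A \<times> B"
    using distinct unfolding V_eq by auto
  then show ?thesis
    by (simp only: cut_value_def cross_edges_def size_filter_hub_graph[OF finite])
      (simp add: card_cartesian_product)
qed

lemma min_st_cut_iff: "min_st_cut V G s t S \<longleftrightarrow> S = insert s A"
proof -
  have hub_cut: "st_cut V s t (insert s A)"
    using distinct unfolding st_cut_def V_eq by auto
  show ?thesis
  proof
    assume "min_st_cut V G s t S"
    then have "st_cut V s t S" and "cut_value V G S \<le> card A * card B"
      using hub_cut cut_value_hub_cut unfolding min_st_cut_def by metis+
    with cut_value_ge have "card (A - S) = 0" "card (B \<inter> S) = 0"
      by fastforce+
    then have "A - S = {}" "B \<inter> S = {}"
      using finite by simp_all
    with \<open>st_cut V s t S\<close> show "S = insert s A"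
      unfolding st_cut_def V_eq by auto
  next
    assume "S = insert s A"
    then show "min_st_cut V G s t S"
      using hub_cut cut_value_hub_cut cut_value_ge unfolding min_st_cut_def by fastforce
  qed
qed

lemma deg_cross_A:
  assumes "a \<in> A"
  shows "deg G a = k + card B" and "size (cross_edges G {a} (V - insert s A)) = card B"
proof -
  have "{a' \<in> A. a \<in> {s, a'}} = {a}" "{b \<in> B. a \<in> {t, b}} = {}"
    "{(a', b) \<in> A \<times> B. a \<in> {a', b}} = {a} \<times> B"
    using assms distinct by auto
  then show "deg G a = k + card B"
    by (simp only: deg_def size_filter_hub_graph[OF finite]) (simp add: card_cartesian_product)
  let ?Q = "\<lambda>e. e \<inter> {a} \<noteq> {} \<and> e \<inter> (V - insert s A) \<noteq> {}"
  have "{a' \<in> A. ?Q {s, a'}} = {}" "{b \<in> B. ?Q {t, b}} = {}"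
    "{(a', b) \<in> A \<times> B. ?Q {a', b}} = {a} \<times> B"
    using assms distinct unfolding V_eq by auto
  then show "size (cross_edges G {a} (V - insert s A)) = card B"
    by (simp only: cross_edges_def size_filter_hub_graph[OF finite]) (simp add: card_cartesian_product)
qed

lemma deg_cross_B:
  assumes "b \<in> B"
  shows "deg G b = k + card A" and "size (cross_edges G {b} (insert s A)) = card A"
proof -
  have "{a \<in> A. b \<in> {s, a}} = {}" "{b' \<in> B. b \<in> {t, b'}} = {b}"
    "{(a, b') \<in> A \<times> B. b \<in> {a, b'}} = A \<times> {b}"
    using assms distinct by auto
  then show "deg G b = k + card A"
    by (simp only: deg_def size_filter_hub_graph[OF finite]) (simp add: card_cartesian_product)
  let ?Q = "\<lambda>e. e \<inter> {b} \<noteq> {} \<and> e \<inter> insert s A \<noteq> {}"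
  have "{a \<in> A. ?Q {s, a}} = {}" "{b' \<in> B. ?Q {t, b'}} = {}"
    "{(a, b') \<in> A \<times> B. ?Q {a, b'}} = A \<times> {b}"
    using assms distinct by auto
  then show "size (cross_edges G {b} (insert s A)) = card A"
    by (simp only: cross_edges_def size_filter_hub_graph[OF finite]) (simp add: card_cartesian_product)
qed

lemma friendly_hub_cut: "friendly V G (insert s A)"
proof -
  have "V - insert s A = insert t B"
    using distinct unfolding V_eq by auto
  moreover have "size (cross_edges G {s} (insert t B)) = 0" "size (cross_edges G {t} (insert s A)) = 0"
    using distinct finite by (auto simp: cross_edges_def size_filter_hub_graph card_eq_0_iff)
  ultimately show ?thesis
    using deg_cross_A deg_cross_B heavy unfolding friendly_def unfriendly_def by auto
qed

lemma size_hub_graph_le: "size G \<le> 3 * k * k"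
proof -
  have "k * (card A + card B) + card A * card B \<le> k * (k + k) + k * k"
    using heavy by (intro add_mono mult_mono) simp_all
  then show ?thesis
    using size_hub_graph[OF finite] by (simp add: algebra_simps)
qed

lemma card_le_sparsifier_size:
  assumes "friendly_min_cut_sparsifier V G F phi"
  shows "card A * card B \<le> size (sparsifier_edges F phi)"
proof -
  have "s \<in> V" "t \<in> V"
    using V_eq by auto
  with min_st_cut_le_sparsifier_size[OF multigraph assms] show ?thesis
    using min_st_cut_iff friendly_hub_cut cut_value_hub_cut distinct(1) by metis
qed

end

lemma hub_graph_on_halves:
  assumes "4 \<le> n"
  shows "hub_graph_on {0..<n} 0 1 n {2..<n div 2} {n div 2..<n}"
  using assms by unfold_locales auto

lemma square_le_8_mult_halves:
  fixes n :: nat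
  assumes "12 \<le> n"
  shows "n * n \<le> 8 * ((n div 2 - 2) * (n - n div 2))"
proof -
  define j where "j = n div 2 - 6"
  have j: "n div 2 = j + 6"
    using assms unfolding j_def by linarith
  have "n * n \<le> (2 * j + 13) * (2 * j + 13)"
    using j by (intro mult_le_mono) linarith+
  also have "\<dots> \<le> 8 * ((j + 4) * (j + 6))"
    by (simp add: algebra_simps)
  also have "\<dots> \<le> 8 * ((n div 2 - 2) * (n - n div 2))"
    using j by (intro mult_le_mono2 mult_le_mono) linarith+
  finally show ?thesis .
qed

theorem mainTheorem8:
  shows "\<exists>C c :: real. C > 0 \<and> c > 0 \<and> (\<exists>N::nat. \<forall>n\<ge>N.
     \<exists>E :: nat set multiset. multigraph {0..<n} E \<and> real (size E) \<le> C * real n ^ 2 \<and>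
       (\<forall>F (phi :: nat \<Rightarrow> nat). friendly_min_cut_sparsifier {0..<n} E F phi \<longrightarrow>
          real (size (sparsifier_edges F phi)) \<ge> c * real n ^ 2))"
proof -
  have "\<exists>E :: nat set multiset. multigraph {0..<n} E \<and> real (size E) \<le> 3 * real n ^ 2 \<and>
       (\<forall>F (phi :: nat \<Rightarrow> nat). friendly_min_cut_sparsifier {0..<n} E F phi \<longrightarrow>
          real (size (sparsifier_edges F phi)) \<ge> 1/8 * real n ^ 2)" if n: "12 \<le> n" for n
  proof -
    interpret hub_graph_on "{0..<n}" 0 1 n "{2..<n div 2}" "{n div 2..<n}"
      using n by (intro hub_graph_on_halves) simp
    show ?thesis
    proof (intro exI[of _ G] conjI allI impI)
      show "multigraph {0..<n} G"
        by (rule multigraph)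
      have "real (size G) \<le> real (3 * n * n)"
        using size_hub_graph_le by (simp only: of_nat_le_iff)
      then show "real (size G) \<le> 3 * real n ^ 2"
        by (simp add: power2_eq_square)
      fix F and phi :: "nat \<Rightarrow> nat"
      assume "friendly_min_cut_sparsifier {0..<n} G F phi"
      then have "n * n \<le> 8 * size (sparsifier_edges F phi)"
        using square_le_8_mult_halves[OF n] card_le_sparsifier_size[of F phi] by simp
      then have "real (n * n) \<le> real (8 * size (sparsifier_edges F phi))"
        by (simp only: of_nat_le_iff)
      then show "1/8 * real n ^ 2 \<le> real (size (sparsifier_edges F phi))"
        by (simp add: power2_eq_square)
    qed
  qed
  then show ?thesis
    by (intro exI[of _ "3::real"] exI[of _ "1/8::real"] conjI exI[of _ "12::nat"]) simp_all
qed

end
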